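(* Let $\mathsf{C}\subset V$ be a proper cone, $\phi$ in the interior of $\mathsf{C}^*$, $k\ge1$, and $K_\phi=\mathsf{C}\cap\phi^{-1}(1)$. If $\gamma_k^\phi$ is entanglement-breaking, then $K_\phi$ is a polytope.
   Context: Proper cone: closed convex cone in a finite-dimensional real vector space, containing no line, not contained in a hyperplane; $\mathsf{C}^*$ is its dual cone. $\otimes_{\min}$: $\mathsf{C}_1\otimes_{\min}\mathsf{C}_2=\mathrm{conv}\{x\otimes y:x\in\mathsf{C}_1,y\in\mathsf{C}_2\}$, iterated. The $k$th reduction map $\gamma_k^\phi=\frac1k\sum_{j=1}^k\phi^{\otimes(j-1)}\otimes\mathrm{Id}_V\otimes\phi^{\otimes(k-j)}:V^{\otimes k}\to V$ is viewed as a tensor in $(V^* )^{\otimes k}\otimes V$; it is entanglement-breaking if this tensor belongs to $(\mathsf{C}^* )^{\otimes_{\min}k}\otimes_{\min}\mathsf{C}$. *)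

theory Defs
  imports "HOL-Analysis.Analysis"
begin

text \<open>V = real^'n (finite-dimensional real vector space with a fixed basis).
  The dual space V* is identified with V via the standard inner product,
  so a functional f acts as x \<mapsto> f \<bullet> x; dual-basis coordinates of f are f $ i.\<close>

definition proper_cone :: "(real^'n) set \<Rightarrow> bool" where
  "proper_cone C \<longleftrightarrow> closed C \<and> convex_cone C \<and> (\<forall>x. x \<in> C \<and> - x \<in> C \<longrightarrow> x = 0)
     \<and> span C = UNIV"

definition dual_cone :: "(real^'n) set \<Rightarrow> (real^'n) set" where
  "dual_cone C = {f. \<forall>x\<in>C. 0 \<le> f \<bullet> x}"

text \<open>Tensors in (V*)^{\<otimes>k} \<otimes> V, with the k tensor factors indexed by a finite
  type 'k with CARD('k) = k, written in coordinates w.r.t. the product basis.\<close>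

definition prod_tensor :: "('k::finite \<Rightarrow> real^'n) \<Rightarrow> real^'n \<Rightarrow> real^(('n^'k) \<times> 'n)" where
  "prod_tensor f x = (\<chi> p. (\<Prod>l\<in>UNIV. f l $ (fst p $ l)) * x $ snd p)"

text \<open>(C*)^{\<otimes>min k} \<otimes>min C: convex hull of product tensors f_1\<otimes>...\<otimes>f_k\<otimes>x.\<close>

definition min_tensor_cone :: "(real^'n) set \<Rightarrow> (real^'n) set \<Rightarrow> (real^(('n^'k::finite) \<times> 'n)) set" where
  "min_tensor_cone D C = convex hull {prod_tensor f x | f x. (\<forall>l. f l \<in> D) \<and> x \<in> C}"

text \<open>The k-th reduction map \<gamma>_k^\<phi> as a tensor in (V*)^{\<otimes>k} \<otimes> V:
  its (i,m) coefficient is the m-th coordinate of \<gamma>(e_{i_1}\<otimes>...\<otimes>e_{i_k}).\<close>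

definition reduction_tensor :: "real^'n \<Rightarrow> real^(('n^'k::finite) \<times> 'n)" where
  "reduction_tensor \<phi> = (\<chi> p. (1 / real CARD('k)) *
      (\<Sum>j\<in>UNIV. (if fst p $ j = snd p then 1 else 0) * (\<Prod>l\<in>UNIV - {j}. \<phi> $ (fst p $ l))))"

definition entanglement_breaking :: "(real^'n) set \<Rightarrow> real^'n \<Rightarrow> 'k::finite itself \<Rightarrow> bool" where
  "entanglement_breaking C \<phi> _ \<longleftrightarrow>
     (reduction_tensor \<phi> :: real^(('n^'k) \<times> 'n)) \<in> min_tensor_cone (dual_cone C) C"

end

(*
  Write the reduction tensor as a finite nonnegative combination of product tensors
  f\<^sub>1 \<otimes> \<dots> \<otimes> f\<^sub>k \<otimes> x with f\<^sub>l \<in> C* and x \<in> C. Evaluating both sides on y \<otimes> \<dots> \<otimes> y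
  for y in the slice K = C \<inter> {\<phi> = 1} gives y = \<Sum> u (\<Prod>\<^sub>l f\<^sub>l y) x, since \<gamma>(y \<otimes> \<dots> \<otimes> y) = y
  when \<phi> y = 1. All coefficients are nonnegative, so K lies in the cone spanned by the
  finitely many x; normalising them to \<phi> = 1 (possible as \<phi> is strictly positive on
  C - {0}) exhibits K as the convex hull of finitely many points.
*)

theory Submission
  imports Defs
begin

lemma sum_prod_vec_eq_prod_sum:
  fixes g :: "'k::finite \<Rightarrow> 'n::finite \<Rightarrow> 'a::comm_semiring_1"
  shows "(\<Sum>i\<in>(UNIV::('n^'k) set). \<Prod>l\<in>UNIV. g l (i $ l)) = (\<Prod>l\<in>UNIV. \<Sum>a\<in>UNIV. g l a)"
proof -
  have "bij (vec_nth :: 'n^'k \<Rightarrow> 'k \<Rightarrow> 'n)"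
    by (rule bijI') (auto intro: vec_lambda_inverse[symmetric] simp: vec_eq_iff)
  then have "(\<Sum>i\<in>(UNIV::('n^'k) set). \<Prod>l\<in>UNIV. g l (i $ l)) = (\<Sum>h\<in>UNIV. \<Prod>l\<in>UNIV. g l (h l))"
    by (rule sum.reindex_bij_betw)
  also have "\<dots> = (\<Prod>l\<in>UNIV. \<Sum>a\<in>UNIV. g l a)"
    using prod_sum_PiE[of "UNIV::'k set" "\<lambda>_. UNIV::'n set" g] by simp
  finally show ?thesis .
qed

text \<open>The multilinear map \<open>t : V\<^sup>\<otimes>\<^sup>k \<rightarrow> V\<close> evaluated at \<open>y \<otimes> \<dots> \<otimes> y\<close>.\<close>

definition apply_tensor_power :: "real^'n \<Rightarrow> real^(('n^'k::finite) \<times> 'n) \<Rightarrow> real^'n" where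
  "apply_tensor_power y t = (\<chi> m. \<Sum>i\<in>UNIV. t $ (i, m) * (\<Prod>l\<in>UNIV. y $ (i $ l)))"

lemma linear_apply_tensor_power: "linear (apply_tensor_power y)"
  by (rule linearI)
    (simp_all add: apply_tensor_power_def vec_eq_iff sum.distrib sum_distrib_left distrib_right mult.assoc)

lemma apply_tensor_power_prod_tensor:
  fixes f :: "'k::finite \<Rightarrow> real^'n"
  shows "apply_tensor_power y (prod_tensor f x) = (\<Prod>l\<in>UNIV. f l \<bullet> y) *\<^sub>R x"
proof -
  have "apply_tensor_power y (prod_tensor f x) $ m =
        x $ m * (\<Sum>i\<in>(UNIV::('n^'k) set). \<Prod>l\<in>UNIV. f l $ (i $ l) * y $ (i $ l))" for m
    by (simp add: apply_tensor_power_def prod_tensor_def sum_distrib_left prod.distrib algebra_simps)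
  moreover have "(\<Sum>i\<in>(UNIV::('n^'k) set). \<Prod>l\<in>UNIV. f l $ (i $ l) * y $ (i $ l)) = (\<Prod>l\<in>UNIV. f l \<bullet> y)"
    unfolding inner_vec_def inner_real_def by (rule sum_prod_vec_eq_prod_sum)
  ultimately show ?thesis
    by (simp add: vec_eq_iff)
qed

text \<open>The identity of \<open>V\<close> is \<open>\<Sum>\<^sub>a e\<^sub>a \<otimes> e\<^sub>a\<close>, so each summand of \<open>\<gamma>\<^sub>k\<close> is a sum of product tensors.\<close>

lemma reduction_tensor_eq_sum_prod_tensor:
  "(reduction_tensor \<phi> :: real^((('n::finite)^'k::finite) \<times> 'n)) = (1 / real CARD('k)) *\<^sub>R
     (\<Sum>j\<in>UNIV. \<Sum>a\<in>UNIV. prod_tensor ((\<lambda>_. \<phi>)(j := axis a 1)) (axis a 1))"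
proof -
  have "(\<Sum>a\<in>UNIV. prod_tensor ((\<lambda>_. \<phi>)(j := axis a 1)) (axis a 1) $ (i, m)) =
        (if i $ j = m then 1 else 0) * (\<Prod>l\<in>UNIV - {j}. \<phi> $ (i $ l))"
    for j :: 'k and i :: "'n^'k" and m
  proof -
    have summand: "prod_tensor ((\<lambda>_. \<phi>)(j := axis a 1)) (axis a 1) $ (i, m) =
          (axis a 1 $ (i $ j) * axis a 1 $ m) * (\<Prod>l\<in>UNIV - {j}. \<phi> $ (i $ l))" for a
      by (simp add: prod_tensor_def prod.remove[of UNIV j] cong: prod.cong_simp)
    have delta: "(\<Sum>a\<in>UNIV. axis a 1 $ (i $ j) * axis a 1 $ m) = (if i $ j = m then 1 else 0 :: real)"
      by (simp add: axis_def if_distrib[of "\<lambda>x. x * _"] cong: if_cong)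
    show ?thesis
      by (simp only: summand sum_distrib_right[symmetric] delta)
  qed
  then show ?thesis
    by (simp add: vec_eq_iff reduction_tensor_def)
qed

lemma apply_tensor_power_reduction_tensor:
  assumes "\<phi> \<bullet> y = 1"
  shows "apply_tensor_power y (reduction_tensor \<phi> :: real^((('n::finite)^'k::finite) \<times> 'n)) = y"
proof -
  have "(\<Prod>l\<in>UNIV. ((\<lambda>_. \<phi>)(j := axis a 1)) l \<bullet> y) = y $ a" for j :: 'k and a
    using assms by (simp add: prod.remove[of UNIV j] inner_axis' cong: prod.cong_simp)
  then have "apply_tensor_power y (reduction_tensor \<phi> :: real^(('n^'k) \<times> 'n)) =
        (1 / real CARD('k)) *\<^sub>R (\<Sum>j\<in>(UNIV::'k set). \<Sum>a\<in>UNIV. y $ a *\<^sub>R axis a 1)"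
    by (simp add: reduction_tensor_eq_sum_prod_tensor linear_apply_tensor_power linear_scale
        linear_sum apply_tensor_power_prod_tensor)
  also have "\<dots> = y"
    using basis_expansion[of y] by (simp add: scalar_mult_eq_scaleR sum_constant_scaleR del: sum_constant)
  finally show ?thesis .
qed

lemma sum_scaleR_in_convex_hull_normalized:
  fixes X :: "'i \<Rightarrow> 'a::real_inner"
  assumes "finite I" and "\<And>i. i \<in> I \<Longrightarrow> 0 \<le> c i \<and> 0 < \<phi> \<bullet> X i"
    and "\<phi> \<bullet> (\<Sum>i\<in>I. c i *\<^sub>R X i) = 1"
  shows "(\<Sum>i\<in>I. c i *\<^sub>R X i) \<in> convex hull ((\<lambda>i. (1 / (\<phi> \<bullet> X i)) *\<^sub>R X i) ` I)"
proof -
  have "(\<Sum>i\<in>I. c i *\<^sub>R X i) = (\<Sum>i\<in>I. (c i * (\<phi> \<bullet> X i)) *\<^sub>R ((1 / (\<phi> \<bullet> X i)) *\<^sub>R X i))"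
    using assms(2) by (intro sum.cong) (auto simp: less_imp_neq[symmetric])
  also have "\<dots> \<in> convex hull ((\<lambda>i. (1 / (\<phi> \<bullet> X i)) *\<^sub>R X i) ` I)"
  proof (rule convex_sum[OF assms(1) convex_convex_hull])
    show "(\<Sum>i\<in>I. c i * (\<phi> \<bullet> X i)) = 1"
      using assms(3) by (simp add: inner_sum_right)
  qed (use assms(2) in \<open>auto intro: hull_inc mult_nonneg_nonneg less_imp_le\<close>)
  finally show ?thesis .
qed

lemma polytope_slice_of_finitely_generated_cone:
  fixes C :: "'a::real_inner set" and X :: "'i \<Rightarrow> 'a"
  assumes cone: "convex_cone C" and pos: "\<And>x. x \<in> C \<Longrightarrow> x \<noteq> 0 \<Longrightarrow> 0 < \<phi> \<bullet> x"
    and "finite I" and X: "\<And>i. i \<in> I \<Longrightarrow> X i \<in> C"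
    and gen: "\<And>y. y \<in> C \<Longrightarrow> \<phi> \<bullet> y = 1 \<Longrightarrow> \<exists>c. (\<forall>i\<in>I. 0 \<le> c i) \<and> y = (\<Sum>i\<in>I. c i *\<^sub>R X i)"
  shows "polytope {x \<in> C. \<phi> \<bullet> x = 1}"
proof -
  define J where "J = {i \<in> I. X i \<noteq> 0}"
  define Q where "Q = (\<lambda>i. (1 / (\<phi> \<bullet> X i)) *\<^sub>R X i) ` J"
  have J: "finite J" "J \<subseteq> I" "\<And>i. i \<in> J \<Longrightarrow> 0 < \<phi> \<bullet> X i"
    using \<open>finite I\<close> pos X by (auto simp: J_def)
  have "Q \<subseteq> {x \<in> C. \<phi> \<bullet> x = 1}"
    using J X cone by (force simp: Q_def convex_cone_scaleR)
  moreover have "{x \<in> C. \<phi> \<bullet> x = 1} \<subseteq> convex hull Q"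
  proof
    fix y assume y: "y \<in> {x \<in> C. \<phi> \<bullet> x = 1}"
    then obtain c where c: "\<forall>i\<in>I. 0 \<le> c i" and y_eq: "y = (\<Sum>i\<in>I. c i *\<^sub>R X i)"
      using gen by blast
    have "y = (\<Sum>i\<in>J. c i *\<^sub>R X i)"
      unfolding y_eq using J(2) by (intro sum.mono_neutral_right[OF \<open>finite I\<close>]) (auto simp: J_def)
    then show "y \<in> convex hull Q"
      unfolding Q_def using y c J by (auto intro!: sum_scaleR_in_convex_hull_normalized)
  qed
  moreover have "convex {x \<in> C. \<phi> \<bullet> x = 1}"
    using cone convex_hyperplane[of \<phi> 1] unfolding convex_cone_def
    by (simp add: Collect_conj_eq convex_Int)
  ultimately have "{x \<in> C. \<phi> \<bullet> x = 1} = convex hull Q"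
    by (metis hull_minimal subset_antisym)
  then show ?thesis
    using J(1) by (auto simp: polytope_def Q_def)
qed

lemma interior_dual_cone_inner_pos:
  fixes C :: "(real^'n) set"
  assumes "\<phi> \<in> interior (dual_cone C)" and "x \<in> C" and "x \<noteq> 0"
  shows "0 < \<phi> \<bullet> x"
proof -
  obtain e where e: "e > 0" "ball \<phi> e \<subseteq> dual_cone C"
    using assms(1) mem_interior by blast
  define g where "g = \<phi> - ((e / 2) / norm x) *\<^sub>R x"
  have "dist \<phi> g = e / 2"
    using e assms(3) by (simp add: g_def dist_norm)
  then have "g \<in> dual_cone C"
    using e by auto
  then have "0 \<le> g \<bullet> x"
    using assms(2) by (simp add: dual_cone_def)
  also have "g \<bullet> x = \<phi> \<bullet> x - (e / 2) * norm x"
    using assms(3) by (simp add: g_def inner_diff_left power2_norm_eq_inner[symmetric] power2_eq_square)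
  finally show ?thesis
    using e assms(3) by (smt (verit) divide_pos_pos zero_less_norm_iff mult_pos_pos)
qed

lemma min_tensor_coneE:
  fixes t :: "real^((('n::finite)^'k::finite) \<times> 'n)"
  assumes "t \<in> min_tensor_cone D C"
  obtains S :: "(real^(('n^'k) \<times> 'n)) set" and u F X where "finite S"
    and "\<And>s. s \<in> S \<Longrightarrow> 0 \<le> u s \<and> (\<forall>l. F s l \<in> D) \<and> X s \<in> C"
    and "t = (\<Sum>s\<in>S. u s *\<^sub>R prod_tensor (F s) (X s))"
proof -
  obtain S u where S: "finite S" "S \<subseteq> {prod_tensor f x | f x. (\<forall>l. f l \<in> D) \<and> x \<in> C}"
      "\<forall>s\<in>S. 0 \<le> u s" "t = (\<Sum>s\<in>S. u s *\<^sub>R s)"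
    using assms unfolding min_tensor_cone_def convex_hull_explicit by auto
  have "\<forall>s\<in>S. \<exists>f x. prod_tensor f x = s \<and> (\<forall>l. f l \<in> D) \<and> x \<in> C"
    using S(2) by blast
  then obtain F X where FX: "\<And>s. s \<in> S \<Longrightarrow> prod_tensor (F s) (X s) = s \<and> (\<forall>l. F s l \<in> D) \<and> X s \<in> C"
    by metis
  show ?thesis
  proof (rule that[OF S(1)])
    show "0 \<le> u s \<and> (\<forall>l. F s l \<in> D) \<and> X s \<in> C" if "s \<in> S" for s
      using S(3) FX[OF that] that by simp
    show "t = (\<Sum>s\<in>S. u s *\<^sub>R prod_tensor (F s) (X s))"
      unfolding S(4) using FX by (simp cong: sum.cong)
  qed
qed

theorem lemma3:
  fixes C :: "(real^'n) set" and \<phi> :: "real^'n"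
  assumes "proper_cone C"
    and "\<phi> \<in> interior (dual_cone C)"
    and "entanglement_breaking C \<phi> TYPE('k::finite)"
  shows "polytope {x \<in> C. \<phi> \<bullet> x = 1}"
proof -
  obtain S :: "(real^(('n^'k) \<times> 'n)) set" and u and F :: "_ \<Rightarrow> 'k \<Rightarrow> real^'n" and X where S: "finite S"
    and SFX: "\<And>s. s \<in> S \<Longrightarrow> 0 \<le> u s \<and> (\<forall>l. F s l \<in> dual_cone C) \<and> X s \<in> C"
    and decomp: "(reduction_tensor \<phi> :: real^(('n^'k) \<times> 'n)) = (\<Sum>s\<in>S. u s *\<^sub>R prod_tensor (F s) (X s))"
    using assms(3) unfolding entanglement_breaking_def by (rule min_tensor_coneE) (rule that)
  show ?thesis
  proof (rule polytope_slice_of_finitely_generated_cone)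
    show "convex_cone C"
      using assms(1) by (simp add: proper_cone_def)
    show "\<And>x. x \<in> C \<Longrightarrow> x \<noteq> 0 \<Longrightarrow> 0 < \<phi> \<bullet> x"
      using assms(2) by (rule interior_dual_cone_inner_pos)
  next
    fix y assume y: "y \<in> C" "\<phi> \<bullet> y = 1"
    have "y = apply_tensor_power y (reduction_tensor \<phi> :: real^(('n^'k) \<times> 'n))"
      using y(2) by (simp add: apply_tensor_power_reduction_tensor)
    also have "\<dots> = (\<Sum>s\<in>S. (u s * (\<Prod>l\<in>UNIV. F s l \<bullet> y)) *\<^sub>R X s)"
      by (simp add: decomp linear_apply_tensor_power linear_sum linear_scale apply_tensor_power_prod_tensor)
    moreover have "0 \<le> u s * (\<Prod>l\<in>UNIV. F s l \<bullet> y)" if "s \<in> S" for s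
      using SFX[OF that] y(1) unfolding dual_cone_def by (simp add: prod_nonneg)
    ultimately show "\<exists>c. (\<forall>s\<in>S. 0 \<le> c s) \<and> y = (\<Sum>s\<in>S. c s *\<^sub>R X s)"
      by (intro exI[of _ "\<lambda>s. u s * (\<Prod>l\<in>UNIV. F s l \<bullet> y)"]) simp
  qed (simp_all add: S SFX)
qed

end
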